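(* Let $G$, $k\ge 3$, the choice strings $c_{i,j}$, $L=k+1$ and $d=k-2$ be as in the construction in the context, and let $s$ be a string of length $L$ such that every choice string $c_{i,j}$ ($1\le i<j\le k$) has a substring of length $L$ at Hamming distance at most $d$ from $s$. Then each of the first $k$ positions of $s$ holds an encoding symbol and the last position of $s$ holds the synchronizing symbol $\#$.
   Context: Let $G=(V,E)$ be an undirected simple graph with $V=\{v_1,\dots,v_n\}$ and edge set $E=\{e_1,\dots,e_m\}$, and let $k\ge 3$ be an integer; put $N=\binom{k}{2}$. The alphabet consists of pairwise distinct symbols: encoding symbols $\sigma_1,\dots,\sigma_n$, string identification symbols $\varphi_1,\dots,\varphi_N$, and a synchronizing symbol $\#$. Order the pairs $(i,j)$ with $1\le i<j\le k$ lexicographically, $(1,2),(1,3),\dots,(1,k),(2,3),\dots,(k-1,k)$, and let $i'$ denote the position of $(i,j)$ in this order. For an edge $e$ joining $v_r$ and $v_s$ with $r<s$ define $\mathrm{block}(i,j,e)=\varphi_{i'}^{\,i-1}\,\sigma_r\,\varphi_{i'}^{\,j-i-1}\,\sigma_s\,\varphi_{i'}^{\,k-j}\,\#$ (a string of length $k+1$), and the choice string $c_{i,j}=\mathrm{block}(i,j,e_1)\,\varphi_{i'}^{\,k}\,\mathrm{block}(i,j,e_2)\,\varphi_{i'}^{\,k}\cdots\varphi_{i'}^{\,k}\,\mathrm{block}(i,j,e_m)$. Set $L=k+1$ and $d=k-2$. *)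

theory Defs
  imports Main
begin

text \<open>Symbols: Sig r is the encoding symbol sigma_r, Phi p the string identification
  symbol phi_p, Hash the synchronizing symbol.\<close>
datatype sym = Sig nat | Phi nat | Hash

definition alphabet :: "nat \<Rightarrow> nat \<Rightarrow> sym set" where
  "alphabet n k = {Sig r | r. 1 \<le> r \<and> r \<le> n} \<union> {Phi p | p. 1 \<le> p \<and> p \<le> k choose 2} \<union> {Hash}"

definition pair_index :: "nat \<Rightarrow> nat \<Rightarrow> nat \<Rightarrow> nat" where
  "pair_index k i j = card {(a, b). 1 \<le> a \<and> a < b \<and> b \<le> k \<and> (a < i \<or> (a = i \<and> b \<le> j))}"

text \<open>An edge is a pair (r,s) with r < s, joining v_r and v_s.\<close>
definition block :: "nat \<Rightarrow> nat \<Rightarrow> nat \<Rightarrow> nat \<times> nat \<Rightarrow> sym list" where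
  "block k i j e = (let p = Phi (pair_index k i j) in
     replicate (i - 1) p @ [Sig (fst e)] @ replicate (j - i - 1) p @ [Sig (snd e)]
       @ replicate (k - j) p @ [Hash])"

fun join :: "'a list \<Rightarrow> 'a list list \<Rightarrow> 'a list" where
  "join sep [] = []"
| "join sep [x] = x"
| "join sep (x # y # xs) = x @ sep @ join sep (y # xs)"

definition choice_string :: "nat \<Rightarrow> (nat \<times> nat) list \<Rightarrow> nat \<Rightarrow> nat \<Rightarrow> sym list" where
  "choice_string k es i j =
     join (replicate k (Phi (pair_index k i j))) (map (block k i j) es)"

definition hamming :: "'a list \<Rightarrow> 'a list \<Rightarrow> nat" where
  "hamming xs ys = length (filter (\<lambda>(x, y). x \<noteq> y) (zip xs ys))"

end

theory Submission
  imports Defs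
begin

text \<open>Every choice string c(i,j) is periodic with period 2k+1, so a window of length k+1 contains,
  besides the identification symbol of (i,j), at most three symbols, taken from the positions i-1,
  j-1 and k of a period; a window at Hamming distance at most k-2 from s agrees with s in at
  least three places. Counting positions of s shows that some pair (1,j) contributes no identification symbol to s;
  then the three agreements of its window are the two encoding symbols and the synchronizing symbol
  of one block, which puts an encoding symbol at position 0 and the synchronizing symbol at
  position k. Every other position p < k without an encoding symbol would force the identification
  symbol of (1,p+1) into s; these symbols would fill all such positions, so no pair (2,j) has its
  identification symbol in s, and the window of (2, max (p+1) 3) puts an encoding symbol at p after
  all.\<close>

fun is_Sig :: "sym \<Rightarrow> bool" where
  "is_Sig (Sig _) = True"
| "is_Sig _ = False"

fun is_Phi :: "sym \<Rightarrow> bool" where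
  "is_Phi (Phi _) = True"
| "is_Phi _ = False"

lemma is_Sig_imp_not_is_Phi: "is_Sig x \<Longrightarrow> \<not> is_Phi x"
  by (cases x) auto

lemma mod_eq_imp_eq_if_close:
  fixes x y m :: nat
  assumes "x mod m = y mod m" "x < y + m" "y < x + m"
  shows "x = y"
proof -
  have "b = a" if "a \<le> b" "a mod m = b mod m" "b < a + m" for a b :: nat
  proof -
    have "m dvd b - a" using mod_eq_dvd_iff_nat[OF that(1)] that(2) by (simp add: eq_commute)
    moreover have "b - a < m" using that by linarith
    ultimately show ?thesis using that(1) by (metis dvd_imp_le le_antisym not_less zero_less_diff)
  qed
  then show ?thesis using assms by (metis nat_le_linear)
qed

lemma card_le_card_UN_disjoint:
  assumes "finite I" "\<And>i. i \<in> I \<Longrightarrow> finite (A i)" "\<And>i. i \<in> I \<Longrightarrow> A i \<noteq> {}"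
    and "\<And>i j. i \<in> I \<Longrightarrow> j \<in> I \<Longrightarrow> i \<noteq> j \<Longrightarrow> A i \<inter> A j = {}"
  shows "card I \<le> card (\<Union>i\<in>I. A i)"
proof -
  have "card I = (\<Sum>i\<in>I. 1)" by simp
  also have "\<dots> \<le> (\<Sum>i\<in>I. card (A i))"
    using assms(2,3) by (intro sum_mono) (simp add: Suc_leI card_gt_0_iff)
  also have "\<dots> = card (\<Union>i\<in>I. A i)"
    using assms by (intro card_UN_disjoint[symmetric]) auto
  finally show ?thesis .
qed

lemma hamming_add_card_agree:
  assumes "length xs = length ys"
  shows "hamming xs ys + card {p. p < length xs \<and> xs ! p = ys ! p} = length xs"
proof -
  define A where "A = {p. p < length xs \<and> xs ! p \<noteq> ys ! p}"
  define B where "B = {p. p < length xs \<and> xs ! p = ys ! p}"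
  have "hamming xs ys = card A"
    unfolding hamming_def length_filter_conv_card A_def using assms by (intro arg_cong[where f = card]) auto
  moreover have "card A + card B = card (A \<union> B)"
    by (rule card_Un_disjoint[symmetric]) (auto simp: A_def B_def)
  moreover have "A \<union> B = {..<length xs}" by (auto simp: A_def B_def)
  ultimately show ?thesis by (simp add: B_def)
qed

lemma nth_join:
  assumes "\<forall>x\<in>set xs. length x = L" "length sep = K" "L > 0" "a < length (join sep xs)"
  shows "a div (L + K) < length xs \<and> join sep xs ! a =
    (if a mod (L + K) < L then xs ! (a div (L + K)) ! (a mod (L + K)) else sep ! (a mod (L + K) - L))"
  using assms
proof (induction sep xs arbitrary: a rule: join.induct)
  case (1 sep)
  then show ?case by simp
next
  case (2 sep x)
  then show ?case by (simp add: nth_append)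
next
  case (3 sep x y xs)
  have lx: "length x = L" using "3.prems"(1) by simp
  show ?case
  proof (cases "a < L + K")
    case True
    then show ?thesis using lx "3.prems"(2) by (auto simp add: nth_append)
  next
    case False
    define b where "b = a - (L + K)"
    have a: "a = b + (L + K)" using False b_def by simp
    have "b < length (join sep (y # xs))" using "3.prems" a by simp
    then have IH: "b div (L + K) < length (y # xs) \<and> join sep (y # xs) ! b =
        (if b mod (L + K) < L then (y # xs) ! (b div (L + K)) ! (b mod (L + K)) else sep ! (b mod (L + K) - L))"
      using "3.IH" "3.prems"(1-3) by simp
    have "a mod (L + K) = b mod (L + K)" "a div (L + K) = Suc (b div (L + K))"
      using a "3.prems"(3) by (simp_all add: div_add_self2)
    moreover have "join sep (x # y # xs) ! a = join sep (y # xs) ! b"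
      using a lx "3.prems"(2) by (simp add: nth_append)
    ultimately show ?thesis using IH by simp
  qed
qed

lemma nth_block:
  assumes "1 \<le> i" "i < j" "j \<le> k" "r \<le> k"
  shows "block k i j e ! r = (if r = i - 1 then Sig (fst e) else if r = j - 1 then Sig (snd e)
     else if r = k then Hash else Phi (pair_index k i j))"
  using assms unfolding block_def Let_def by (auto simp add: nth_append nth_replicate)

text \<open>A choice string is periodic with period 2k+1: a block of length k+1 followed by k copies
  of its identification symbol.\<close>
lemma nth_choice_string:
  assumes "1 \<le> i" "i < j" "j \<le> k" "a < length (choice_string k es i j)"
  shows nth_choice_string_Hash: "a mod (2 * k + 1) = k \<Longrightarrow> choice_string k es i j ! a = Hash"
    and nth_choice_string_Sig: "a mod (2 * k + 1) \<in> {i - 1, j - 1} \<Longrightarrow> is_Sig (choice_string k es i j ! a)"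
    and nth_choice_string_Phi:
      "a mod (2 * k + 1) \<notin> {i - 1, j - 1, k} \<Longrightarrow> choice_string k es i j ! a = Phi (pair_index k i j)"
proof -
  define r where "r = a mod (2 * k + 1)"
  define e where "e = es ! (a div (2 * k + 1))"
  have lengths: "\<forall>x\<in>set (map (block k i j) es). length x = k + 1"
    using assms(1-3) by (auto simp add: block_def Let_def)
  have M: "2 * k + 1 = (k + 1) + k" by simp
  have "choice_string k es i j ! a = (if r < k + 1 then block k i j e ! r
      else replicate k (Phi (pair_index k i j)) ! (r - (k + 1)))"
    using nth_join[OF lengths _ _ assms(4)[unfolded choice_string_def], of k] assms(1-3)
    unfolding choice_string_def r_def e_def M by simp
  moreover have "r < 2 * k + 1" unfolding r_def by simp
  ultimately have "choice_string k es i j ! a = (if r = i - 1 then Sig (fst e) else if r = j - 1 then Sig (snd e)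
     else if r = k then Hash else Phi (pair_index k i j))"
    using nth_block[OF assms(1-3), of r e] assms(1-3) by auto
  then show "r = k \<Longrightarrow> choice_string k es i j ! a = Hash"
    and "r \<in> {i - 1, j - 1} \<Longrightarrow> is_Sig (choice_string k es i j ! a)"
    and "r \<notin> {i - 1, j - 1, k} \<Longrightarrow> choice_string k es i j ! a = Phi (pair_index k i j)"
    using assms(1-3) by auto
qed

lemma pair_index_less:
  assumes "1 \<le> i" "i < j" "j \<le> k" "1 \<le> i'" "i' < j'" "j' \<le> k" "i < i' \<or> (i = i' \<and> j < j')"
  shows "pair_index k i j < pair_index k i' j'"
proof -
  define S where "S i j = {(a, b). 1 \<le> a \<and> a < b \<and> b \<le> k \<and> (a < i \<or> (a = i \<and> b \<le> j))}" for i j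
  have "finite (S i' j')" unfolding S_def by (rule finite_subset[of _ "{0..k} \<times> {0..k}"]) auto
  moreover have "S i j \<subset> S i' j'"
  proof
    show "S i j \<subseteq> S i' j'" unfolding S_def using assms(7) by auto
    have "(i', j') \<in> S i' j'" "(i', j') \<notin> S i j" unfolding S_def using assms by auto
    then show "S i j \<noteq> S i' j'" by blast
  qed
  ultimately show ?thesis unfolding pair_index_def S_def[symmetric] by (rule psubset_card_mono)
qed

lemma pair_index_inject:
  assumes "1 \<le> i" "i < j" "j \<le> k" "1 \<le> i'" "i' < j'" "j' \<le> k"
  shows "pair_index k i j = pair_index k i' j' \<longleftrightarrow> i = i' \<and> j = j'"
  using pair_index_less[OF assms] pair_index_less[OF assms(4-6) assms(1-3)]
  by (metis less_irrefl nat_neq_iff)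

locale close_center =
  fixes k :: nat and es :: "(nat \<times> nat) list" and s :: "sym list"
  assumes k_ge_3: "k \<ge> 3"
    and length_s: "length s = k + 1"
    and close: "1 \<le> i \<Longrightarrow> i < j \<Longrightarrow> j \<le> k \<Longrightarrow>
      \<exists>u t v. choice_string k es i j = u @ t @ v \<and> length t = k + 1 \<and> hamming t s \<le> k - 2"
begin

definition phi_positions :: "nat \<Rightarrow> nat set" where
  "phi_positions q = {p. p \<le> k \<and> s ! p = Phi q}"

definition non_phi_positions :: "nat set" where
  "non_phi_positions = {p. p \<le> k \<and> \<not> is_Phi (s ! p)}"

lemma close_window:
  assumes "1 \<le> i" "i < j" "j \<le> k"
  obtains b where "b + k < length (choice_string k es i j)"
    and "3 \<le> card {p. p \<le> k \<and> choice_string k es i j ! (b + p) = s ! p}"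
proof -
  obtain u t v where c: "choice_string k es i j = u @ t @ v"
    and t: "length t = k + 1" "hamming t s \<le> k - 2"
    using close[OF assms] by blast
  have "t ! p = choice_string k es i j ! (length u + p)" if "p \<le> k" for p
    using c t(1) that by (simp add: nth_append)
  then have "{p. p \<le> k \<and> choice_string k es i j ! (length u + p) = s ! p}
      = {p. p < length t \<and> t ! p = s ! p}"
    using t(1) by force
  moreover have "hamming t s + card {p. p < length t \<and> t ! p = s ! p} = k + 1"
    using hamming_add_card_agree[of t s] t(1) length_s by simp
  moreover have "length u + k < length (choice_string k es i j)" using c t(1) by simp
  ultimately show ?thesis using that[of "length u"] t(2) k_ge_3 by simp
qed

lemma three_le_card_phi_positions_add_non_phi:
  assumes "1 \<le> i" "i < j" "j \<le> k"
  shows "3 \<le> card (phi_positions (pair_index k i j)) + card non_phi_positions"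
proof -
  let ?c = "choice_string k es i j"
  obtain b where b: "b + k < length ?c" and agree: "3 \<le> card {p. p \<le> k \<and> ?c ! (b + p) = s ! p}"
    using close_window[OF assms] by blast
  have "?c ! (b + p) = Phi (pair_index k i j) \<or> \<not> is_Phi (?c ! (b + p))" if "p \<le> k" for p
    using nth_choice_string[where es = es and a = "b + p", OF assms] b that
    by (cases "(b + p) mod (2 * k + 1) \<in> {i - 1, j - 1, k}") (auto dest: is_Sig_imp_not_is_Phi)
  then have "{p. p \<le> k \<and> ?c ! (b + p) = s ! p} \<subseteq> phi_positions (pair_index k i j) \<union> non_phi_positions"
    unfolding phi_positions_def non_phi_positions_def by force
  then have "card {p. p \<le> k \<and> ?c ! (b + p) = s ! p}
      \<le> card (phi_positions (pair_index k i j) \<union> non_phi_positions)"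
    by (rule card_mono[rotated]) (simp add: phi_positions_def non_phi_positions_def)
  also have "\<dots> \<le> card (phi_positions (pair_index k i j)) + card non_phi_positions"
    by (rule card_Un_le)
  finally show ?thesis using agree by simp
qed

text \<open>Without a matching identification symbol, the at least three agreements must be at the
  three non-identification positions of the period; a window of length k+1 can contain all three
  only if it covers the two encoding symbols and the following synchronizing symbol of one block.\<close>
lemma block_aligned_if_no_phi:
  assumes "1 \<le> i" "i < j" "j \<le> k" "phi_positions (pair_index k i j) = {}"
  shows "\<exists>t0 \<le> i - 1. s ! (k - t0) = Hash \<and> is_Sig (s ! (i - 1 - t0)) \<and> is_Sig (s ! (j - 1 - t0))"
proof -
  let ?c = "choice_string k es i j"
  obtain b where b: "b + k < length ?c" and agree: "3 \<le> card {p. p \<le> k \<and> ?c ! (b + p) = s ! p}"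
    using close_window[OF assms(1-3)] by blast
  define M where "M = 2 * k + 1"
  define A where "A = {p. p \<le> k \<and> ?c ! (b + p) = s ! p}"
  define res where "res p = (b + p) mod M" for p
  have inj: "inj_on (res) (A)"
    by (rule inj_onI) (auto simp: A_def res_def M_def dest: mod_eq_imp_eq_if_close)
  have "res ` A \<subseteq> {i - 1, j - 1, k}"
  proof
    fix r assume "r \<in> res ` A"
    then obtain p where p: "p \<le> k" "?c ! (b + p) = s ! p" "r = res p" unfolding A_def by blast
    have "s ! p \<noteq> Phi (pair_index k i j)" using assms(4) p(1) unfolding phi_positions_def by blast
    then show "r \<in> {i - 1, j - 1, k}"
      using nth_choice_string_Phi[where es = es and a = "b + p", OF assms(1-3)] b p
      unfolding res_def M_def by force
  qed
  moreover have "card {i - 1, j - 1, k} = 3" using assms(1-3) by (auto simp add: card_insert_if)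
  moreover have "card (res ` A) = card (A)" using inj by (rule card_image)
  ultimately have "res ` A = {i - 1, j - 1, k}"
    using agree[folded A_def] by (metis card_subset_eq finite.emptyI finite_insert le_antisym card_mono)
  then obtain pH p1 p2 where pH: "pH \<in> A" "res pH = k"
    and p1: "p1 \<in> A" "res p1 = i - 1" and p2: "p2 \<in> A" "res p2 = j - 1"
    by (metis imageE insertI1 insertI2)
  have within_block: "p + (k - r) = pH" if "p \<in> A" "res p = r" "r \<le> k" for p r
  proof -
    have "(b + p + (k - r)) mod M = (r + (k - r)) mod M"
      using that(2) unfolding res_def by (metis mod_add_left_eq)
    also have "\<dots> = (b + pH) mod M" using pH(2) that(3) unfolding res_def M_def by simp
    finally have "b + p + (k - r) = b + pH"
      by (rule mod_eq_imp_eq_if_close) (use that pH(1) in \<open>auto simp: A_def M_def\<close>)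
    then show ?thesis by simp
  qed
  have "p1 + (k - (i - 1)) = pH" "p2 + (k - (j - 1)) = pH"
    using within_block[OF p1] within_block[OF p2] assms(1-3) by auto
  moreover have "pH \<le> k" using pH(1) unfolding A_def by simp
  ultimately have "k - pH \<le> i - 1" "i - 1 - (k - pH) = p1" "j - 1 - (k - pH) = p2" "k - (k - pH) = pH"
    using assms(1-3) by auto
  moreover have "s ! pH = Hash"
    using nth_choice_string_Hash[where es = es and a = "b + pH", OF assms(1-3)] pH b
    unfolding A_def res_def M_def by auto
  moreover have "is_Sig (s ! p1)" "is_Sig (s ! p2)"
    using nth_choice_string_Sig[where es = es and a = "b + p1", OF assms(1-3)]
      nth_choice_string_Sig[where es = es and a = "b + p2", OF assms(1-3)] p1 p2 b
    unfolding A_def res_def M_def by auto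
  ultimately show ?thesis by metis
qed

lemma ex_first_row_pair_without_phi: "\<exists>j. 2 \<le> j \<and> j \<le> k \<and> phi_positions (pair_index k 1 j) = {}"
proof (rule ccontr)
  assume no_empty: "\<not> ?thesis"
  define F where "F = (\<Union>j\<in>{2..k}. phi_positions (pair_index k 1 j))"
  define B where "B = phi_positions (pair_index k 2 3)"
  have fin: "finite (phi_positions q)" "finite non_phi_positions" for q
    unfolding phi_positions_def non_phi_positions_def by auto
  have "card {2..k} \<le> card F" unfolding F_def
  proof (rule card_le_card_UN_disjoint)
    fix j j' assume "j \<in> {2..k}" "j' \<in> {2..k}" "j \<noteq> j'"
    then have "pair_index k 1 j \<noteq> pair_index k 1 j'" by (simp add: pair_index_inject)
    then show "phi_positions (pair_index k 1 j) \<inter> phi_positions (pair_index k 1 j') = {}"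
      unfolding phi_positions_def by auto
  qed (use no_empty fin in auto)
  moreover have "3 \<le> card B + card non_phi_positions"
    unfolding B_def using three_le_card_phi_positions_add_non_phi k_ge_3 by simp
  moreover have "card (F \<union> B \<union> non_phi_positions) = card F + card B + card non_phi_positions"
  proof -
    have "pair_index k 1 j \<noteq> pair_index k 2 3" if "j \<in> {2..k}" for j
      using that k_ge_3 by (simp add: pair_index_inject)
    then have "F \<inter> B = {}" unfolding F_def B_def phi_positions_def by auto
    moreover have "(F \<union> B) \<inter> non_phi_positions = {}"
      unfolding F_def B_def phi_positions_def non_phi_positions_def by auto
    moreover have "finite F" unfolding F_def using fin by auto
    ultimately show ?thesis using fin by (simp add: card_Un_disjoint B_def)
  qed
  moreover have "card (F \<union> B \<union> non_phi_positions) \<le> card {..k}"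
    by (rule card_mono) (auto simp: F_def B_def phi_positions_def non_phi_positions_def)
  ultimately show False using k_ge_3 by simp
qed

lemma nth_k_eq_Hash: "s ! k = Hash"
  and is_Sig_nth_0: "is_Sig (s ! 0)"
proof -
  obtain j where "2 \<le> j" "j \<le> k" "phi_positions (pair_index k 1 j) = {}"
    using ex_first_row_pair_without_phi by blast
  then show "s ! k = Hash" "is_Sig (s ! 0)" using block_aligned_if_no_phi[of 1 j] by auto
qed

definition non_Sig_positions :: "nat set" where
  "non_Sig_positions = {p. p < k \<and> \<not> is_Sig (s ! p)}"

lemma non_Sig_position_pos: "p \<in> non_Sig_positions \<Longrightarrow> 0 < p"
  using is_Sig_nth_0 unfolding non_Sig_positions_def by (cases p) auto

lemma phi_positions_subset_non_Sig: "phi_positions q \<subseteq> non_Sig_positions"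
  using nth_k_eq_Hash unfolding phi_positions_def non_Sig_positions_def by (force simp: le_less)

text \<open>For a position p before the end that does not hold an encoding symbol, the pair (1,p+1)
  forces its identification symbol into s; these symbols are distinct and can only sit at such
  positions, so they fill all of them.\<close>
lemma first_row_phi_if_non_Sig:
  assumes "p \<in> non_Sig_positions"
  shows "\<exists>p' \<in> non_Sig_positions. s ! p = Phi (pair_index k 1 (p' + 1))"
proof -
  let ?X = non_Sig_positions
  let ?A = "\<lambda>p'. phi_positions (pair_index k 1 (p' + 1))"
  have "?A p' \<noteq> {}" if "p' \<in> ?X" for p'
    using that non_Sig_position_pos[OF that] block_aligned_if_no_phi[of 1 "p' + 1"]
    unfolding non_Sig_positions_def by auto
  moreover have fin: "finite ?X" unfolding non_Sig_positions_def by simp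
  ultimately have "card ?X \<le> card (\<Union>p'\<in>?X. ?A p')"
  proof (intro card_le_card_UN_disjoint)
    fix p' p'' assume "p' \<in> ?X" "p'' \<in> ?X" "p' \<noteq> p''"
    then have "pair_index k 1 (p' + 1) \<noteq> pair_index k 1 (p'' + 1)"
      using non_Sig_position_pos pair_index_inject[of 1 "p' + 1" k 1 "p'' + 1"]
      by (auto simp: non_Sig_positions_def)
    then show "?A p' \<inter> ?A p'' = {}" unfolding phi_positions_def by auto
  qed (auto simp: phi_positions_def)
  moreover have "(\<Union>p'\<in>?X. ?A p') \<subseteq> ?X" using phi_positions_subset_non_Sig by blast
  ultimately have "(\<Union>p'\<in>?X. ?A p') = ?X" using fin by (metis card_subset_eq le_antisym card_mono)
  then show ?thesis using assms unfolding phi_positions_def by auto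
qed

lemma is_Sig_nth:
  assumes "p < k"
  shows "is_Sig (s ! p)"
proof (rule ccontr)
  assume "\<not> is_Sig (s ! p)"
  then have p: "p \<in> non_Sig_positions" using assms unfolding non_Sig_positions_def by simp
  then have "1 \<le> p" "p < k"
    using non_Sig_position_pos[OF p] unfolding non_Sig_positions_def by auto
  define j where "j = max (p + 1) 3"
  have ij: "1 \<le> (2::nat)" "2 < j" "j \<le> k" using \<open>p < k\<close> k_ge_3 unfolding j_def by auto
  have "phi_positions (pair_index k 2 j) = {}"
  proof -
    have "s ! x \<noteq> Phi (pair_index k 2 j)" if x: "x \<in> non_Sig_positions" for x
    proof
      assume "s ! x = Phi (pair_index k 2 j)"
      moreover obtain p' where "p' \<in> non_Sig_positions" "s ! x = Phi (pair_index k 1 (p' + 1))"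
        using first_row_phi_if_non_Sig[OF x] by blast
      ultimately show False
        using ij non_Sig_position_pos pair_index_inject[of 1 "p' + 1" k 2 j] \<open>p' \<in> non_Sig_positions\<close>
        by (auto simp: non_Sig_positions_def)
    qed
    then show ?thesis using phi_positions_subset_non_Sig unfolding phi_positions_def by blast
  qed
  then obtain t0 where t0: "t0 \<le> 1" "s ! (k - t0) = Hash" "is_Sig (s ! (1 - t0))" "is_Sig (s ! (j - 1 - t0))"
    using block_aligned_if_no_phi[OF ij] by auto
  have "t0 = 0"
  proof (rule ccontr)
    assume "t0 \<noteq> 0"
    then have "s ! (k - 1) = Hash" using t0(1,2) by (simp add: le_Suc_eq)
    then have "k - 1 \<in> non_Sig_positions" using k_ge_3 unfolding non_Sig_positions_def by auto
    then show False using first_row_phi_if_non_Sig \<open>s ! (k - 1) = Hash\<close> by fastforce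
  qed
  then have "is_Sig (s ! p)" using t0(3,4) \<open>1 \<le> p\<close> unfolding j_def by (cases "p = 1") auto
  then show False using p unfolding non_Sig_positions_def by simp
qed

end

theorem lemma2:
  fixes n k :: nat and es :: "(nat \<times> nat) list" and s :: "sym list"
  assumes edges: "\<forall>(r, t) \<in> set es. 1 \<le> r \<and> r < t \<and> t \<le> n"
    and simple: "distinct es"
    and k3: "k \<ge> 3"
    and s_alph: "set s \<subseteq> alphabet n k"
    and s_len: "length s = k + 1"
    and close: "\<forall>i j. 1 \<le> i \<and> i < j \<and> j \<le> k \<longrightarrow>
        (\<exists>u t v. choice_string k es i j = u @ t @ v \<and> length t = k + 1 \<and> hamming t s \<le> k - 2)"
  shows "(\<forall>p < k. \<exists>r. 1 \<le> r \<and> r \<le> n \<and> s ! p = Sig r) \<and> s ! k = Hash"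
proof -
  interpret close_center k es s
    using k3 s_len close by unfold_locales blast+
  have "\<exists>r. 1 \<le> r \<and> r \<le> n \<and> s ! p = Sig r" if p: "p < k" for p
  proof -
    obtain r where r: "s ! p = Sig r"
      using is_Sig_nth[OF p] by (cases "s ! p") auto
    have "s ! p \<in> alphabet n k" using s_alph s_len p by (auto intro: nth_mem)
    then show ?thesis using r unfolding alphabet_def by auto
  qed
  then show ?thesis using nth_k_eq_Hash by blast
qed

end
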